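(* Let $(G,T)$ be a terminal graph obtained from the terminal graph $(G-v,T\setminus\{v\})$ by introducing $v$, and let $k$ be a positive integer. Let $(H,\ell)=\mathcal{C}^c_k(G-v,T\setminus\{v\})$. Construct a labeled graph $(H',\ell')$ as follows. For every node $x$ of $H$ and every color $c\in\{1,\dots,k\}$: if the unique function $\delta:T\to\{1,\dots,k\}$ with $\delta(v)=c$ and $\delta|_{T\setminus\{v\}}=\ell(x)$ is a coloring of $G[T]$, introduce a node $x_c$ with $\ell'(x_c)=\delta$. For every pair of distinct nodes $x_c,y_d$, add an edge between them if and only if $x=y$, or $xy$ is an edge of $H$ and $c=d$. Then $(H',\ell')=\mathcal{C}^c_k(G,T)$. Moreover, given any certificate for $(H,\ell)$, there is a certificate for $(H',\ell')$ such that for every $k$-coloring $\gamma$ of $G$, if $x$ is the $\gamma|_{V(G)\setminus\{v\}}$-node of $H$ and $\gamma(v)=c$, then $x_c$ is the $\gamma$-node of $H'$.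
   Context: A terminal graph $(G,T)$ is a graph $G$ with $T\subseteq V(G)$. $(G,T)$ is obtained from $(G-v,T\setminus\{v\})$ by introducing $v$ if $T\ne V(G)$, $v\in T$ and $N(v)\subseteq T$. A $k$-coloring of $G$ is a map $\alpha:V(G)\to\{1,\dots,k\}$ with $\alpha(u)\ne\alpha(w)$ for all edges $uw$. $\mathcal{C}_k(G)$ has the $k$-colorings as nodes, adjacent iff they differ on exactly one vertex. For $T\subseteq V(G)$, label each coloring $\gamma$ by $\gamma|_T$. A label component is a maximal set of colorings with the same label inducing a connected subgraph of $\mathcal{C}_k(G)$. The contracted solution graph $\mathcal{C}^c_k(G,T)=(H,\ell)$ has one node $x$ per label component $S_x$, distinct $x,y$ adjacent iff some $\gamma\in S_x,\gamma'\in S_y$ are adjacent in $\mathcal{C}_k(G)$, and $\ell(x)$ the common label on $S_x$; labeled graphs are identified up to label-preserving isomorphism. A certificate for $(H,\ell)$ is an assignment of nonempty sets $S_x$ of $k$-colorings of $G$ to the nodes such that: the $S_x$ partition the $k$-colorings; $\gamma|_T=\ell(x)$ for $\gamma\in S_x$; adjacent nodes have distinct labels; each $S_x$ induces a connected subgraph of $\mathcal{C}_k(G)$; distinct $x,y$ are adjacent iff some $\gamma\in S_x$ and $\gamma'\in S_y$ are adjacent in $\mathcal{C}_k(G)$. The $\gamma$-node with respect to a certificate $S$ is the node $x$ with $\gamma\in S_x$. *)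

theory Defs
  imports Main "HOL-Library.FuncSet"
begin

definition simple_graph :: "'v set \<Rightarrow> ('v \<times> 'v) set \<Rightarrow> bool" where
  "simple_graph V E \<longleftrightarrow> finite V \<and> E \<subseteq> V \<times> V \<and> sym E \<and> irrefl E"

definition del_vertex :: "('v \<times> 'v) set \<Rightarrow> 'v \<Rightarrow> ('v \<times> 'v) set" where
  "del_vertex E v = {(a, b). (a, b) \<in> E \<and> a \<noteq> v \<and> b \<noteq> v}"

definition induced_edges :: "('v \<times> 'v) set \<Rightarrow> 'v set \<Rightarrow> ('v \<times> 'v) set" where
  "induced_edges E S = E \<inter> (S \<times> S)"

definition introduces :: "'v set \<Rightarrow> ('v \<times> 'v) set \<Rightarrow> 'v set \<Rightarrow> 'v \<Rightarrow> bool" where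
  "introduces V E T v \<longleftrightarrow> T \<subseteq> V \<and> T \<noteq> V \<and> v \<in> T \<and> {u. (v, u) \<in> E} \<subseteq> T"

definition colorings :: "nat \<Rightarrow> 'v set \<Rightarrow> ('v \<times> 'v) set \<Rightarrow> ('v \<Rightarrow> nat) set" where
  "colorings k V E = {\<alpha> \<in> V \<rightarrow>\<^sub>E {1..k}. \<forall>(u, w) \<in> E. \<alpha> u \<noteq> \<alpha> w}"

definition col_adj :: "'v set \<Rightarrow> ('v \<Rightarrow> nat) \<Rightarrow> ('v \<Rightarrow> nat) \<Rightarrow> bool" where
  "col_adj V \<alpha> \<beta> \<longleftrightarrow> card {u \<in> V. \<alpha> u \<noteq> \<beta> u} = 1"

definition col_connected :: "'v set \<Rightarrow> ('v \<Rightarrow> nat) set \<Rightarrow> bool" where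
  "col_connected V S \<longleftrightarrow> S \<noteq> {} \<and>
     (\<forall>\<alpha>\<in>S. \<forall>\<beta>\<in>S. (\<alpha>, \<beta>) \<in> {(a, b). a \<in> S \<and> b \<in> S \<and> col_adj V a b}\<^sup>*)"

definition same_label :: "'v set \<Rightarrow> ('v \<Rightarrow> nat) set \<Rightarrow> bool" where
  "same_label T S \<longleftrightarrow> (\<forall>\<alpha>\<in>S. \<forall>\<beta>\<in>S. restrict \<alpha> T = restrict \<beta> T)"

definition label_component ::
  "nat \<Rightarrow> 'v set \<Rightarrow> ('v \<times> 'v) set \<Rightarrow> 'v set \<Rightarrow> ('v \<Rightarrow> nat) set \<Rightarrow> bool" where
  "label_component k V E T S \<longleftrightarrow>
     S \<subseteq> colorings k V E \<and> same_label T S \<and> col_connected V S \<and>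
     (\<forall>S'. S \<subseteq> S' \<and> S' \<subseteq> colorings k V E \<and> same_label T S' \<and> col_connected V S' \<longrightarrow> S' = S)"

text \<open>A labeled graph: node set, (symmetric) adjacency relation, labeling of nodes by partial
  colorings (extensional functions 'v \<Rightarrow> nat).\<close>
type_synonym ('n, 'v) lgraph = "'n set \<times> ('n \<times> 'n) set \<times> ('n \<Rightarrow> 'v \<Rightarrow> nat)"

definition lp_iso :: "('n, 'v) lgraph \<Rightarrow> ('m, 'v) lgraph \<Rightarrow> bool" where
  "lp_iso G1 G2 \<longleftrightarrow> (case G1 of (N1, A1, l1) \<Rightarrow> case G2 of (N2, A2, l2) \<Rightarrow>
     (\<exists>f. bij_betw f N1 N2 \<and>
          (\<forall>x\<in>N1. \<forall>y\<in>N1. (x, y) \<in> A1 \<longleftrightarrow> (f x, f y) \<in> A2) \<and>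
          (\<forall>x\<in>N1. l2 (f x) = l1 x)))"

definition csg :: "nat \<Rightarrow> 'v set \<Rightarrow> ('v \<times> 'v) set \<Rightarrow> 'v set \<Rightarrow> (('v \<Rightarrow> nat) set, 'v) lgraph" where
  "csg k V E T =
    ({S. label_component k V E T S},
     {(S1, S2). label_component k V E T S1 \<and> label_component k V E T S2 \<and> S1 \<noteq> S2 \<and>
                (\<exists>\<gamma>\<in>S1. \<exists>\<gamma>'\<in>S2. col_adj V \<gamma> \<gamma>')},
     (\<lambda>S. restrict (SOME \<gamma>. \<gamma> \<in> S) T))"

definition certificate ::
  "nat \<Rightarrow> 'v set \<Rightarrow> ('v \<times> 'v) set \<Rightarrow> 'v set \<Rightarrow> ('n, 'v) lgraph \<Rightarrow> ('n \<Rightarrow> ('v \<Rightarrow> nat) set) \<Rightarrow> bool" where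
  "certificate k V E T H S \<longleftrightarrow> (case H of (N, A, l) \<Rightarrow>
     (\<forall>x\<in>N. S x \<noteq> {}) \<and>
     (\<forall>x\<in>N. \<forall>y\<in>N. x \<noteq> y \<longrightarrow> S x \<inter> S y = {}) \<and>
     (\<Union>x\<in>N. S x) = colorings k V E \<and>
     (\<forall>x\<in>N. \<forall>\<gamma>\<in>S x. restrict \<gamma> T = l x) \<and>
     (\<forall>x\<in>N. \<forall>y\<in>N. (x, y) \<in> A \<longrightarrow> l x \<noteq> l y) \<and>
     (\<forall>x\<in>N. col_connected V (S x)) \<and>
     (\<forall>x\<in>N. \<forall>y\<in>N. x \<noteq> y \<longrightarrow> ((x, y) \<in> A \<longleftrightarrow> (\<exists>\<gamma>\<in>S x. \<exists>\<gamma>'\<in>S y. col_adj V \<gamma> \<gamma>'))))"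

definition intro_label :: "'v set \<Rightarrow> 'v \<Rightarrow> ('v \<Rightarrow> nat) \<Rightarrow> nat \<Rightarrow> ('v \<Rightarrow> nat)" where
  "intro_label T v lb c = restrict (\<lambda>u. if u = v then c else lb u) T"

definition intro_graph ::
  "nat \<Rightarrow> ('v \<times> 'v) set \<Rightarrow> 'v set \<Rightarrow> 'v \<Rightarrow> ('n, 'v) lgraph \<Rightarrow> ('n \<times> nat, 'v) lgraph" where
  "intro_graph k E T v H = (case H of (N, A, l) \<Rightarrow>
     (let N' = {(x, c). x \<in> N \<and> c \<in> {1..k} \<and>
                        intro_label T v (l x) c \<in> colorings k T (induced_edges E T)}
      in (N',
          {((x, c), (y, d)). (x, c) \<in> N' \<and> (y, d) \<in> N' \<and> (x, c) \<noteq> (y, d) \<and>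
                             (x = y \<or> ((x, y) \<in> A \<and> c = d))},
          (\<lambda>(x, c). intro_label T v (l x) c))))"

end

theory Submission
  imports Defs
begin

text \<open>
  Every \<open>k\<close>-coloring of \<open>G\<close> is a coloring \<open>\<beta>\<close> of \<open>G - v\<close> extended by a color \<open>c\<close> at
  \<open>v\<close>; since all neighbours of \<open>v\<close> are terminals, the extension is a coloring exactly when the
  resulting label is a coloring of \<open>G[T]\<close>. Given a certificate \<open>S\<close> for \<open>(H,\<ell>)\<close>, put into
  node \<open>x\<^sub>c\<close> the extensions \<open>\<beta>(v := c)\<close> of the members \<open>\<beta>\<close> of \<open>S x\<close>. A recoloring step either
  changes \<open>v\<close> and nothing else (moving between \<open>x\<^sub>c\<close> and \<open>x\<^sub>d\<close>) or keeps the color of \<open>v\<close> and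
  is a recoloring step of \<open>G - v\<close> (moving within \<open>x\<^sub>c\<close> or to \<open>y\<^sub>c\<close> along an edge \<open>xy\<close>), so
  these sets form a certificate for \<open>(H',\<ell>')\<close>. A labeled graph has a certificate iff it is
  isomorphic to the contracted solution graph, whose label components form the canonical certificate.
\<close>

abbreviation adj_within :: "'v set \<Rightarrow> ('v \<Rightarrow> nat) set \<Rightarrow> (('v \<Rightarrow> nat) \<times> ('v \<Rightarrow> nat)) set" where
  "adj_within V S \<equiv> {(a, b). a \<in> S \<and> b \<in> S \<and> col_adj V a b}"

lemma col_adj_commute: "col_adj V a b \<longleftrightarrow> col_adj V b a"
proof -
  have "{u \<in> V. a u \<noteq> b u} = {u \<in> V. b u \<noteq> a u}" by auto
  then show ?thesis unfolding col_adj_def by simp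
qed

lemma sym_adj_within: "sym (adj_within V S)"
  using col_adj_commute unfolding sym_def by blast

lemma col_adj_fun_upd: "col_adj V (\<beta>(v := c)) (\<beta>'(v := c)) \<longleftrightarrow> col_adj (V - {v}) \<beta> \<beta>'"
proof -
  have "{u \<in> V. (\<beta>(v := c)) u \<noteq> (\<beta>'(v := c)) u} = {u \<in> V - {v}. \<beta> u \<noteq> \<beta>' u}" by auto
  then show ?thesis unfolding col_adj_def by simp
qed

lemma col_adj_restrict_delete:
  assumes "col_adj V \<gamma> \<gamma>'" and "\<gamma> v = \<gamma>' v"
  shows "col_adj (V - {v}) (restrict \<gamma> (V - {v})) (restrict \<gamma>' (V - {v}))"
proof -
  have "{u \<in> V - {v}. restrict \<gamma> (V - {v}) u \<noteq> restrict \<gamma>' (V - {v}) u} = {u \<in> V. \<gamma> u \<noteq> \<gamma>' u}"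
    using assms(2) by auto
  then show ?thesis using assms(1) unfolding col_adj_def by simp
qed

lemma col_adj_differ_at:
  assumes "col_adj V \<gamma> \<gamma>'" and "v \<in> V" and "\<gamma> v \<noteq> \<gamma>' v"
  shows "restrict \<gamma> (V - {v}) = restrict \<gamma>' (V - {v})"
proof -
  obtain a where a: "{u \<in> V. \<gamma> u \<noteq> \<gamma>' u} = {a}"
    using assms(1) unfolding col_adj_def by (meson card_1_singletonE)
  moreover have "v \<in> {u \<in> V. \<gamma> u \<noteq> \<gamma>' u}" using assms(2,3) by simp
  ultimately have "{u \<in> V. \<gamma> u \<noteq> \<gamma>' u} = {v}" by simp
  then show ?thesis by (intro restrict_ext) blast
qed

lemma col_connected_from:
  assumes "\<gamma> \<in> S" and reach: "\<And>\<beta>. \<beta> \<in> S \<Longrightarrow> (\<gamma>, \<beta>) \<in> (adj_within V S)\<^sup>*"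
  shows "col_connected V S"
  unfolding col_connected_def
proof (intro conjI ballI)
  fix a b assume "a \<in> S" "b \<in> S"
  have "(a, \<gamma>) \<in> (adj_within V S)\<^sup>*"
    using reach[OF \<open>a \<in> S\<close>] by (rule symD[OF sym_rtrancl[OF sym_adj_within]])
  with reach[OF \<open>b \<in> S\<close>] show "(a, b) \<in> (adj_within V S)\<^sup>*" by (simp add: rtrancl_trans)
qed (use assms(1) in blast)

lemma col_connected_Un:
  assumes S1: "col_connected V S1" and S2: "col_connected V S2"
    and \<gamma>: "\<gamma> \<in> S1" and \<gamma>': "\<gamma>' \<in> S2" and link: "\<gamma> = \<gamma>' \<or> col_adj V \<gamma> \<gamma>'"
  shows "col_connected V (S1 \<union> S2)"
proof -
  let ?R = "adj_within V (S1 \<union> S2)"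
  have "(adj_within V S1)\<^sup>* \<subseteq> ?R\<^sup>*" "(adj_within V S2)\<^sup>* \<subseteq> ?R\<^sup>*"
    by (rule rtrancl_mono, blast)+
  then have in_S1: "\<And>a b. a \<in> S1 \<Longrightarrow> b \<in> S1 \<Longrightarrow> (a, b) \<in> ?R\<^sup>*"
    and in_S2: "\<And>a b. a \<in> S2 \<Longrightarrow> b \<in> S2 \<Longrightarrow> (a, b) \<in> ?R\<^sup>*"
    using S1 S2 unfolding col_connected_def by blast+
  have "(\<gamma>, \<gamma>') \<in> ?R\<^sup>*"
  proof (cases "\<gamma> = \<gamma>'")
    case False
    then have "(\<gamma>, \<gamma>') \<in> ?R" using link \<gamma> \<gamma>' by blast
    then show ?thesis by (rule r_into_rtrancl)
  qed simp
  then have "(\<gamma>, a) \<in> ?R\<^sup>*" if "a \<in> S1 \<union> S2" for a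
    using that in_S1[OF \<gamma>] in_S2[OF \<gamma>'] by (meson UnE rtrancl_trans)
  then show ?thesis using \<gamma> by (intro col_connected_from) auto
qed

lemma col_connected_image:
  assumes S: "col_connected V S"
    and adj: "\<And>a b. a \<in> S \<Longrightarrow> b \<in> S \<Longrightarrow> col_adj V a b \<Longrightarrow> col_adj W (g a) (g b)"
  shows "col_connected W (g ` S)"
proof -
  have "(g a, g b) \<in> (adj_within W (g ` S))\<^sup>*" if "(a, b) \<in> (adj_within V S)\<^sup>*" for a b
    using that
  proof (induction rule: rtrancl_induct)
    case (step y z)
    then have "(g y, g z) \<in> adj_within W (g ` S)" using adj by blast
    with step.IH show ?case by (rule rtrancl_into_rtrancl)
  qed simp
  then show ?thesis using S unfolding col_connected_def by blast
qed

lemma same_label_Un: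
  assumes "same_label T S1" "same_label T S2" "\<gamma> \<in> S1" "\<gamma>' \<in> S2"
    and "restrict \<gamma> T = restrict \<gamma>' T"
  shows "same_label T (S1 \<union> S2)"
  using assms unfolding same_label_def by (metis UnE)

lemma label_component_Un_eq:
  assumes "label_component k V E T S1" "label_component k V E T S2"
    and "same_label T (S1 \<union> S2)" "col_connected V (S1 \<union> S2)"
  shows "S1 = S2"
proof -
  have "S1 \<union> S2 \<subseteq> colorings k V E" using assms(1,2) unfolding label_component_def by blast
  then have "S1 \<union> S2 = S1" "S1 \<union> S2 = S2"
    using assms unfolding label_component_def by (meson Un_upper1 Un_upper2)+
  then show ?thesis by simp
qed

lemma label_component_eqI:
  assumes S1: "label_component k V E T S1" and S2: "label_component k V E T S2"
    and "\<gamma> \<in> S1" "\<gamma> \<in> S2"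
  shows "S1 = S2"
proof (rule label_component_Un_eq[OF S1 S2])
  show "same_label T (S1 \<union> S2)"
    using S1 S2 assms(3,4) same_label_Un[of T S1 S2 \<gamma> \<gamma>] by (simp add: label_component_def)
  show "col_connected V (S1 \<union> S2)"
    using S1 S2 assms(3,4) col_connected_Un[of V S1 S2 \<gamma> \<gamma>] by (simp add: label_component_def)
qed

lemma label_component_adj_label_neq:
  assumes S1: "label_component k V E T S1" and S2: "label_component k V E T S2" and "S1 \<noteq> S2"
    and "\<gamma> \<in> S1" "\<gamma>' \<in> S2" "col_adj V \<gamma> \<gamma>'"
  shows "restrict \<gamma> T \<noteq> restrict \<gamma>' T"
proof
  assume "restrict \<gamma> T = restrict \<gamma>' T"
  then have "same_label T (S1 \<union> S2)"
    using S1 S2 assms(4,5) same_label_Un[of T S1 S2 \<gamma> \<gamma>'] by (simp add: label_component_def)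
  moreover have "col_connected V (S1 \<union> S2)"
    using S1 S2 assms(4-6) col_connected_Un[of V S1 S2 \<gamma> \<gamma>'] by (simp add: label_component_def)
  ultimately show False using label_component_Un_eq[OF S1 S2] \<open>S1 \<noteq> S2\<close> by blast
qed

lemma label_component_exists:
  assumes \<gamma>: "\<gamma> \<in> colorings k V E"
  obtains S where "label_component k V E T S" and "\<gamma> \<in> S"
proof
  define L where "L = {\<beta> \<in> colorings k V E. restrict \<beta> T = restrict \<gamma> T}"
  define C where "C = (adj_within V L)\<^sup>* `` {\<gamma>}"
  have "\<gamma> \<in> L" using \<gamma> unfolding L_def by simp
  then show "\<gamma> \<in> C" unfolding C_def by simp
  have C_L: "C \<subseteq> L"
  proof
    fix \<beta> assume "\<beta> \<in> C"
    then have "(\<gamma>, \<beta>) \<in> (adj_within V L)\<^sup>*" unfolding C_def by simp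
    then show "\<beta> \<in> L" using \<open>\<gamma> \<in> L\<close> by (induction rule: rtrancl_induct) auto
  qed
  have reach: "(\<gamma>, \<beta>) \<in> (adj_within V C)\<^sup>*" if "(\<gamma>, \<beta>) \<in> (adj_within V L)\<^sup>*" for \<beta>
    using that
  proof (induction rule: rtrancl_induct)
    case (step y z)
    then have "(y, z) \<in> adj_within V C" unfolding C_def by (auto intro: rtrancl_into_rtrancl)
    with step.IH show ?case by (rule rtrancl_into_rtrancl)
  qed simp
  have "col_connected V C"
    using \<open>\<gamma> \<in> C\<close> reach by (intro col_connected_from) (auto simp: C_def)
  moreover have "S' = C"
    if "C \<subseteq> S'" "S' \<subseteq> colorings k V E" "same_label T S'" "col_connected V S'" for S'
  proof
    have "S' \<subseteq> L" using that \<open>\<gamma> \<in> C\<close> unfolding L_def same_label_def by blast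
    then have "(adj_within V S')\<^sup>* \<subseteq> (adj_within V L)\<^sup>*" by (intro rtrancl_mono) blast
    then show "S' \<subseteq> C" using that(1,4) \<open>\<gamma> \<in> C\<close> unfolding col_connected_def C_def by blast
  qed (use that in simp)
  moreover have "same_label T C"
    unfolding same_label_def by (metis (mono_tags, lifting) C_L L_def mem_Collect_eq subsetD)
  ultimately show "label_component k V E T C" using C_L unfolding label_component_def L_def by blast
qed

lemma certificate_csg: "certificate k V E T (csg k V E T) (\<lambda>S. S)"
proof -
  let ?C = "{S. label_component k V E T S}"
  have label: "restrict \<gamma> T = restrict (SOME \<gamma>. \<gamma> \<in> S) T"
    if "label_component k V E T S" "\<gamma> \<in> S" for S \<gamma>
    using that someI[of "\<lambda>\<gamma>. \<gamma> \<in> S"] unfolding label_component_def same_label_def by blast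
  have "colorings k V E \<subseteq> \<Union>?C"
  proof
    fix \<gamma> assume "\<gamma> \<in> colorings k V E"
    then obtain S where "label_component k V E T S" "\<gamma> \<in> S" by (rule label_component_exists)
    then show "\<gamma> \<in> \<Union>?C" by blast
  qed
  moreover have "\<Union>?C \<subseteq> colorings k V E" unfolding label_component_def by blast
  moreover have "restrict (SOME \<gamma>. \<gamma> \<in> S1) T \<noteq> restrict (SOME \<gamma>. \<gamma> \<in> S2) T"
    if "label_component k V E T S1" "label_component k V E T S2" "S1 \<noteq> S2"
      "\<gamma> \<in> S1" "\<gamma>' \<in> S2" "col_adj V \<gamma> \<gamma>'" for S1 S2 \<gamma> \<gamma>'
    using label_component_adj_label_neq[OF that] label[OF that(1,4)] label[OF that(2,5)] by simp
  moreover have "S1 \<inter> S2 = {}"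
    if "label_component k V E T S1" "label_component k V E T S2" "S1 \<noteq> S2" for S1 S2
    using that label_component_eqI[OF that(1,2)] by blast
  moreover have "S \<noteq> {}" "col_connected V S" if "label_component k V E T S" for S
    using that unfolding label_component_def col_connected_def by simp_all
  ultimately show ?thesis
    unfolding certificate_def csg_def prod.case using label by (simp add: Union_eq[symmetric]) blast
qed

lemma certificate_lp_iso:
  assumes iso: "lp_iso (N, A, l) H" and cert: "certificate k V E T H S"
  obtains S' where "certificate k V E T (N, A, l) S'"
proof -
  obtain N2 A2 l2 where H: "H = (N2, A2, l2)" by (rule prod_cases3)
  obtain f where bij: "bij_betw f N N2"
    and adj: "\<forall>x\<in>N. \<forall>y\<in>N. (x, y) \<in> A \<longleftrightarrow> (f x, f y) \<in> A2"
    and lab: "\<forall>x\<in>N. l2 (f x) = l x"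
    using iso unfolding lp_iso_def H by auto
  have f_N: "\<And>x. x \<in> N \<Longrightarrow> f x \<in> N2"
    and f_inj: "\<And>x y. x \<in> N \<Longrightarrow> y \<in> N \<Longrightarrow> x \<noteq> y \<Longrightarrow> f x \<noteq> f y"
    and f_Union: "(\<Union>x\<in>N. S (f x)) = (\<Union>y\<in>N2. S y)"
    using bij unfolding bij_betw_def inj_on_def by blast+
  have ne: "\<forall>y\<in>N2. S y \<noteq> {}"
    and dj: "\<forall>x\<in>N2. \<forall>y\<in>N2. x \<noteq> y \<longrightarrow> S x \<inter> S y = {}"
    and un: "(\<Union>y\<in>N2. S y) = colorings k V E"
    and lb: "\<forall>y\<in>N2. \<forall>\<gamma>\<in>S y. restrict \<gamma> T = l2 y"
    and ad: "\<forall>x\<in>N2. \<forall>y\<in>N2. (x, y) \<in> A2 \<longrightarrow> l2 x \<noteq> l2 y"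
    and cc: "\<forall>y\<in>N2. col_connected V (S y)"
    and ed: "\<forall>x\<in>N2. \<forall>y\<in>N2. x \<noteq> y \<longrightarrow> ((x, y) \<in> A2 \<longleftrightarrow> (\<exists>\<gamma>\<in>S x. \<exists>\<gamma>'\<in>S y. col_adj V \<gamma> \<gamma>'))"
    using cert unfolding certificate_def H by simp_all
  have "certificate k V E T (N, A, l) (S \<circ> f)"
    unfolding certificate_def prod.case comp_def
  proof (intro conjI)
    show "\<forall>x\<in>N. S (f x) \<noteq> {}" using ne f_N by blast
    show "\<forall>x\<in>N. \<forall>y\<in>N. x \<noteq> y \<longrightarrow> S (f x) \<inter> S (f y) = {}" using dj f_N f_inj by blast
    show "(\<Union>x\<in>N. S (f x)) = colorings k V E" using f_Union un by simp
    show "\<forall>x\<in>N. \<forall>\<gamma>\<in>S (f x). restrict \<gamma> T = l x" using lb f_N lab by metis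
    show "\<forall>x\<in>N. \<forall>y\<in>N. (x, y) \<in> A \<longrightarrow> l x \<noteq> l y" using ad adj f_N lab by metis
    show "\<forall>x\<in>N. col_connected V (S (f x))" using cc f_N by blast
    show "\<forall>x\<in>N. \<forall>y\<in>N. x \<noteq> y \<longrightarrow>
        ((x, y) \<in> A \<longleftrightarrow> (\<exists>\<gamma>\<in>S (f x). \<exists>\<gamma>'\<in>S (f y). col_adj V \<gamma> \<gamma>'))"
      using ed adj f_N f_inj by blast
  qed
  then show ?thesis by (rule that)
qed

lemma certificate_label_component:
  assumes cert: "certificate k V E T (N, A, l) S" and "x \<in> N"
  shows "label_component k V E T (S x)"
proof -
  have ne: "\<forall>x\<in>N. S x \<noteq> {}"
    and un: "(\<Union>x\<in>N. S x) = colorings k V E"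
    and lb: "\<forall>x\<in>N. \<forall>\<gamma>\<in>S x. restrict \<gamma> T = l x"
    and ad: "\<forall>x\<in>N. \<forall>y\<in>N. (x, y) \<in> A \<longrightarrow> l x \<noteq> l y"
    and cc: "\<forall>x\<in>N. col_connected V (S x)"
    and ed: "\<forall>x\<in>N. \<forall>y\<in>N. x \<noteq> y \<longrightarrow> ((x, y) \<in> A \<longleftrightarrow> (\<exists>\<gamma>\<in>S x. \<exists>\<gamma>'\<in>S y. col_adj V \<gamma> \<gamma>'))"
    using cert unfolding certificate_def by simp_all
  have maximal: "S' \<subseteq> S x"
    if S': "S x \<subseteq> S'" "S' \<subseteq> colorings k V E" "same_label T S'" "col_connected V S'" for S'
  proof
    fix \<beta> assume "\<beta> \<in> S'"
    obtain \<alpha> where \<alpha>: "\<alpha> \<in> S x" using ne \<open>x \<in> N\<close> by blast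
    have "(\<alpha>, \<beta>) \<in> (adj_within V S')\<^sup>*"
      using S'(1,4) \<alpha> \<open>\<beta> \<in> S'\<close> unfolding col_connected_def by blast
    then show "\<beta> \<in> S x"
    proof (induction rule: rtrancl_induct)
      case (step y z)
      then have z: "z \<in> S'" "col_adj V y z" by auto
      then obtain w where w: "w \<in> N" "z \<in> S w" using S'(2) un by blast
      \<comment> \<open>a step leaving \<open>S x\<close> would join two nodes with equal labels by an edge\<close>
      show ?case
      proof (rule ccontr)
        assume "z \<notin> S x"
        then have "x \<noteq> w" using w by blast
        then have "(x, w) \<in> A \<longleftrightarrow> (\<exists>\<gamma>\<in>S x. \<exists>\<gamma>'\<in>S w. col_adj V \<gamma> \<gamma>')"
          using ed \<open>x \<in> N\<close> w by blast
        then have "(x, w) \<in> A" using w step.IH z(2) by blast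
        moreover have "restrict y T = restrict z T"
          using S'(3) step.hyps(2) z(1) unfolding same_label_def by blast
        ultimately show False using ad lb \<open>x \<in> N\<close> w step.IH by metis
      qed
    qed (rule \<alpha>)
  qed
  have "S x \<subseteq> colorings k V E" using un \<open>x \<in> N\<close> by blast
  moreover have "same_label T (S x)" using lb \<open>x \<in> N\<close> unfolding same_label_def by simp
  ultimately show ?thesis
    unfolding label_component_def using maximal cc \<open>x \<in> N\<close> by blast
qed

lemma certificate_imp_lp_iso:
  assumes cert: "certificate k V E T H S"
  shows "lp_iso H (csg k V E T)"
proof -
  obtain N A l where H: "H = (N, A, l)" by (rule prod_cases3)
  have ne: "\<forall>x\<in>N. S x \<noteq> {}"
    and dj: "\<forall>x\<in>N. \<forall>y\<in>N. x \<noteq> y \<longrightarrow> S x \<inter> S y = {}"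
    and un: "(\<Union>x\<in>N. S x) = colorings k V E"
    and lb: "\<forall>x\<in>N. \<forall>\<gamma>\<in>S x. restrict \<gamma> T = l x"
    and ad: "\<forall>x\<in>N. \<forall>y\<in>N. (x, y) \<in> A \<longrightarrow> l x \<noteq> l y"
    and ed: "\<forall>x\<in>N. \<forall>y\<in>N. x \<noteq> y \<longrightarrow> ((x, y) \<in> A \<longleftrightarrow> (\<exists>\<gamma>\<in>S x. \<exists>\<gamma>'\<in>S y. col_adj V \<gamma> \<gamma>'))"
    using cert unfolding certificate_def H by simp_all
  have comp: "label_component k V E T (S x)" if "x \<in> N" for x
    using cert that unfolding H by (rule certificate_label_component)
  have inj: "inj_on S N"
  proof (rule inj_onI)
    fix x y assume "x \<in> N" "y \<in> N" "S x = S y"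
    then show "x = y" using ne dj by (metis Int_absorb)
  qed
  have "{S. label_component k V E T S} \<subseteq> S ` N"
  proof
    fix C assume "C \<in> {S. label_component k V E T S}"
    then have C: "label_component k V E T C" by simp
    then obtain \<gamma> where "\<gamma> \<in> C" "\<gamma> \<in> colorings k V E"
      unfolding label_component_def col_connected_def by blast
    then obtain x where "x \<in> N" "\<gamma> \<in> S x" using un by blast
    then show "C \<in> S ` N" using label_component_eqI[OF comp C] \<open>\<gamma> \<in> C\<close> by blast
  qed
  then have bij: "bij_betw S N {S. label_component k V E T S}"
    unfolding bij_betw_def using inj comp by blast
  have edges: "(x, y) \<in> A \<longleftrightarrow> S x \<noteq> S y \<and> (\<exists>\<gamma>\<in>S x. \<exists>\<gamma>'\<in>S y. col_adj V \<gamma> \<gamma>')"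
    if "x \<in> N" "y \<in> N" for x y
  proof (cases "x = y")
    case True
    then show ?thesis using ad that by blast
  next
    case False
    then have "S x \<noteq> S y" using inj that unfolding inj_on_def by blast
    then show ?thesis using ed that False by simp
  qed
  have labels: "restrict (SOME \<gamma>. \<gamma> \<in> S x) T = l x" if "x \<in> N" for x
    using that ne lb someI_ex[of "\<lambda>\<gamma>. \<gamma> \<in> S x"] by blast
  show ?thesis
    unfolding lp_iso_def csg_def H prod.case
    using bij edges labels comp by (intro exI[of _ S]) auto
qed

lemma colorings_restrict:
  assumes "\<gamma> \<in> colorings k V E" and "U \<subseteq> V" and "F \<subseteq> E \<inter> U \<times> U"
  shows "restrict \<gamma> U \<in> colorings k U F"
proof -
  have "\<forall>(u, w)\<in>F. restrict \<gamma> U u \<noteq> restrict \<gamma> U w"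
    using assms unfolding colorings_def by fastforce
  with assms(1,2) show ?thesis unfolding colorings_def by auto
qed

lemma restrict_fun_upd_eq_intro_label:
  "restrict (\<beta>(v := c)) T = intro_label T v (restrict \<beta> (T - {v})) c"
  unfolding intro_label_def by (rule restrict_ext) simp

lemma intro_label_inj:
  assumes "v \<in> T" and "lb \<in> extensional (T - {v})" and "lb' \<in> extensional (T - {v})"
    and eq: "intro_label T v lb c = intro_label T v lb' d"
  shows "lb = lb' \<and> c = d"
proof
  show "c = d" using fun_cong[OF eq, of v] \<open>v \<in> T\<close> unfolding intro_label_def by simp
  show "lb = lb'"
  proof
    fix u show "lb u = lb' u"
      using fun_cong[OF eq, of u] assms(2,3) unfolding intro_label_def extensional_def
      by (cases "u \<in> T - {v}") auto
  qed
qed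

lemma fun_upd_in_colorings:
  assumes \<beta>: "\<beta> \<in> colorings k (V - {v}) (del_vertex E v)" and "v \<in> V" and "c \<in> {1..k}"
    and T: "restrict (\<beta>(v := c)) T \<in> colorings k T (induced_edges E T)"
    and "v \<in> T" and nbrs: "\<And>u. (v, u) \<in> E \<or> (u, v) \<in> E \<Longrightarrow> u \<in> T"
  shows "\<beta>(v := c) \<in> colorings k V E"
proof -
  have "\<beta>(v := c) \<in> V \<rightarrow>\<^sub>E {1..k}"
    using \<beta> \<open>v \<in> V\<close> \<open>c \<in> {1..k}\<close> unfolding colorings_def PiE_def extensional_def Pi_def by auto
  moreover have "(\<beta>(v := c)) u \<noteq> (\<beta>(v := c)) w" if "(u, w) \<in> E" for u w
  proof (cases "u = v \<or> w = v")
    case True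
    then have "u \<in> T" "w \<in> T" using nbrs \<open>(u, w) \<in> E\<close> \<open>v \<in> T\<close> by auto
    with that have "(u, w) \<in> induced_edges E T" unfolding induced_edges_def by blast
    then have "restrict (\<beta>(v := c)) T u \<noteq> restrict (\<beta>(v := c)) T w"
      using T unfolding colorings_def by blast
    with \<open>u \<in> T\<close> \<open>w \<in> T\<close> show ?thesis by simp
  next
    case False
    with that \<beta> show ?thesis unfolding colorings_def del_vertex_def by auto
  qed
  ultimately show ?thesis unfolding colorings_def by blast
qed

definition intro_nodes ::
  "nat \<Rightarrow> ('v \<times> 'v) set \<Rightarrow> 'v set \<Rightarrow> 'v \<Rightarrow> 'n set \<Rightarrow> ('n \<Rightarrow> 'v \<Rightarrow> nat) \<Rightarrow> ('n \<times> nat) set" where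
  "intro_nodes k E T v N l = {(x, c). x \<in> N \<and> c \<in> {1..k} \<and>
     intro_label T v (l x) c \<in> colorings k T (induced_edges E T)}"

definition intro_cert :: "'v \<Rightarrow> ('n \<Rightarrow> ('v \<Rightarrow> nat) set) \<Rightarrow> 'n \<times> nat \<Rightarrow> ('v \<Rightarrow> nat) set" where
  "intro_cert v S = (\<lambda>(x, c). (\<lambda>\<beta>. \<beta>(v := c)) ` S x)"

lemma intro_graph_eq:
  "intro_graph k E T v (N, A, l) =
    (intro_nodes k E T v N l,
     {((x, c), (y, d)). (x, c) \<in> intro_nodes k E T v N l \<and> (y, d) \<in> intro_nodes k E T v N l \<and>
        (x, c) \<noteq> (y, d) \<and> (x = y \<or> ((x, y) \<in> A \<and> c = d))},
     (\<lambda>(x, c). intro_label T v (l x) c))"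
  unfolding intro_graph_def intro_nodes_def Let_def by simp

locale vertex_introduction =
  fixes k :: nat and V :: "'v set" and E :: "('v \<times> 'v) set" and T :: "'v set" and v :: 'v
    and N :: "'n set" and A :: "('n \<times> 'n) set" and l :: "'n \<Rightarrow> 'v \<Rightarrow> nat"
    and S :: "'n \<Rightarrow> ('v \<Rightarrow> nat) set"
  assumes simple: "simple_graph V E" and introduces: "introduces V E T v"
    and cert: "certificate k (V - {v}) (del_vertex E v) (T - {v}) (N, A, l) S"
begin

lemma v_in_T: "v \<in> T" and T_subset: "T \<subseteq> V" and v_in_V: "v \<in> V"
  using introduces unfolding introduces_def by auto

lemma nbr_in_T: "(v, u) \<in> E \<or> (u, v) \<in> E \<Longrightarrow> u \<in> T"
  using simple introduces unfolding simple_graph_def introduces_def sym_def by blast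

lemma S_nonempty: "x \<in> N \<Longrightarrow> S x \<noteq> {}"
  and S_disjoint: "x \<in> N \<Longrightarrow> y \<in> N \<Longrightarrow> \<beta> \<in> S x \<Longrightarrow> \<beta> \<in> S y \<Longrightarrow> x = y"
  and S_Union: "(\<Union>x\<in>N. S x) = colorings k (V - {v}) (del_vertex E v)"
  and S_label: "x \<in> N \<Longrightarrow> \<beta> \<in> S x \<Longrightarrow> restrict \<beta> (T - {v}) = l x"
  and S_adj_label: "x \<in> N \<Longrightarrow> y \<in> N \<Longrightarrow> (x, y) \<in> A \<Longrightarrow> l x \<noteq> l y"
  and S_connected: "x \<in> N \<Longrightarrow> col_connected (V - {v}) (S x)"
  and S_adj_iff: "x \<in> N \<Longrightarrow> y \<in> N \<Longrightarrow> x \<noteq> y \<Longrightarrow>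
    (x, y) \<in> A \<longleftrightarrow> (\<exists>\<beta>\<in>S x. \<exists>\<beta>'\<in>S y. col_adj (V - {v}) \<beta> \<beta>')"
  using cert unfolding certificate_def by auto

lemma S_colorings: "x \<in> N \<Longrightarrow> \<beta> \<in> S x \<Longrightarrow> \<beta> \<in> colorings k (V - {v}) (del_vertex E v)"
  using S_Union by blast

lemma S_extensional: "x \<in> N \<Longrightarrow> \<beta> \<in> S x \<Longrightarrow> \<beta> \<in> extensional (V - {v})"
  using S_colorings unfolding colorings_def PiE_def by blast

lemma label_extensional:
  assumes "x \<in> N" shows "l x \<in> extensional (T - {v})"
proof -
  obtain \<beta> where "\<beta> \<in> S x" using S_nonempty assms by blast
  then have "l x = restrict \<beta> (T - {v})" using S_label assms by simp
  then show ?thesis by simp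
qed

lemma label_fun_upd: "x \<in> N \<Longrightarrow> \<beta> \<in> S x \<Longrightarrow> restrict (\<beta>(v := c)) T = intro_label T v (l x) c"
  by (simp add: restrict_fun_upd_eq_intro_label S_label)

lemma mem_intro_cert:
  assumes "x \<in> N"
  shows "\<gamma> \<in> intro_cert v S (x, c) \<longleftrightarrow>
    \<gamma> \<in> extensional V \<and> restrict \<gamma> (V - {v}) \<in> S x \<and> \<gamma> v = c"
proof
  assume "\<gamma> \<in> intro_cert v S (x, c)"
  then obtain \<beta> where "\<beta> \<in> S x" and \<gamma>: "\<gamma> = \<beta>(v := c)" unfolding intro_cert_def by auto
  moreover have "\<beta> \<in> extensional (V - {v})" using S_extensional assms \<open>\<beta> \<in> S x\<close> .
  ultimately show "\<gamma> \<in> extensional V \<and> restrict \<gamma> (V - {v}) \<in> S x \<and> \<gamma> v = c"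
    using v_in_V by (auto simp: extensional_def extensional_restrict)
next
  assume \<gamma>: "\<gamma> \<in> extensional V \<and> restrict \<gamma> (V - {v}) \<in> S x \<and> \<gamma> v = c"
  show "\<gamma> \<in> intro_cert v S (x, c)" unfolding intro_cert_def prod.case
  proof (rule image_eqI)
    show "\<gamma> = (restrict \<gamma> (V - {v}))(v := c)" using \<gamma> by (force simp: fun_eq_iff extensional_def)
  qed (use \<gamma> in blast)
qed

lemma intro_cert_subset_colorings:
  assumes "(x, c) \<in> intro_nodes k E T v N l"
  shows "intro_cert v S (x, c) \<subseteq> colorings k V E"
proof
  fix \<gamma> assume "\<gamma> \<in> intro_cert v S (x, c)"
  then obtain \<beta> where \<beta>: "\<beta> \<in> S x" and \<gamma>: "\<gamma> = \<beta>(v := c)" unfolding intro_cert_def by auto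
  have x: "x \<in> N" "c \<in> {1..k}" "intro_label T v (l x) c \<in> colorings k T (induced_edges E T)"
    using assms unfolding intro_nodes_def by auto
  show "\<gamma> \<in> colorings k V E"
    unfolding \<gamma>
  proof (rule fun_upd_in_colorings[OF S_colorings[OF x(1) \<beta>] v_in_V x(2) _ v_in_T nbr_in_T])
    show "restrict (\<beta>(v := c)) T \<in> colorings k T (induced_edges E T)"
      using label_fun_upd[OF x(1) \<beta>] x(3) by simp
  qed
qed

lemma coloring_in_intro_cert:
  assumes \<gamma>: "\<gamma> \<in> colorings k V E" and "x \<in> N" and "restrict \<gamma> (V - {v}) \<in> S x"
  shows "(x, \<gamma> v) \<in> intro_nodes k E T v N l \<and> \<gamma> \<in> intro_cert v S (x, \<gamma> v)"
proof
  have ext: "\<gamma> \<in> extensional V" and "\<gamma> v \<in> {1..k}"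
    using \<gamma> v_in_V unfolding colorings_def PiE_def by auto
  have "(restrict \<gamma> (V - {v}))(v := \<gamma> v) = \<gamma>" using ext by (force simp: fun_eq_iff extensional_def)
  then have "intro_label T v (l x) (\<gamma> v) = restrict \<gamma> T"
    using label_fun_upd[OF \<open>x \<in> N\<close> assms(3), of "\<gamma> v"] by simp
  moreover have "restrict \<gamma> T \<in> colorings k T (induced_edges E T)"
    using \<gamma> T_subset by (rule colorings_restrict) (simp add: induced_edges_def)
  ultimately show "(x, \<gamma> v) \<in> intro_nodes k E T v N l"
    using \<open>x \<in> N\<close> \<open>\<gamma> v \<in> {1..k}\<close> unfolding intro_nodes_def by simp
  show "\<gamma> \<in> intro_cert v S (x, \<gamma> v)" using mem_intro_cert assms(2,3) ext by simp
qed

lemma intro_cert_adj_iff: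
  assumes "x \<in> N" "y \<in> N" "(x, c) \<noteq> (y, d)"
  shows "(\<exists>\<gamma>\<in>intro_cert v S (x, c). \<exists>\<gamma>'\<in>intro_cert v S (y, d). col_adj V \<gamma> \<gamma>') \<longleftrightarrow>
    x = y \<or> ((x, y) \<in> A \<and> c = d)"
proof
  assume "\<exists>\<gamma>\<in>intro_cert v S (x, c). \<exists>\<gamma>'\<in>intro_cert v S (y, d). col_adj V \<gamma> \<gamma>'"
  then obtain \<gamma> \<gamma>' where adj: "col_adj V \<gamma> \<gamma>'"
    and \<gamma>: "restrict \<gamma> (V - {v}) \<in> S x" "\<gamma> v = c"
    and \<gamma>': "restrict \<gamma>' (V - {v}) \<in> S y" "\<gamma>' v = d"
    using mem_intro_cert assms(1,2) by blast
  show "x = y \<or> ((x, y) \<in> A \<and> c = d)"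
  proof (cases "c = d")
    case False
    then have "restrict \<gamma> (V - {v}) = restrict \<gamma>' (V - {v})"
      using col_adj_differ_at[OF adj v_in_V] \<gamma>(2) \<gamma>'(2) by simp
    then show ?thesis using S_disjoint assms(1,2) \<gamma>(1) \<gamma>'(1) by metis
  next
    case True
    then have "col_adj (V - {v}) (restrict \<gamma> (V - {v})) (restrict \<gamma>' (V - {v}))"
      using col_adj_restrict_delete[OF adj] \<gamma>(2) \<gamma>'(2) by simp
    then show ?thesis using S_adj_iff assms \<gamma>(1) \<gamma>'(1) True by blast
  qed
next
  assume "x = y \<or> ((x, y) \<in> A \<and> c = d)"
  then consider "x = y" "c \<noteq> d" | "(x, y) \<in> A" "c = d" "x \<noteq> y" using assms(3) by blast
  then obtain \<beta> \<beta>' where "\<beta> \<in> S x" "\<beta>' \<in> S y" "col_adj V (\<beta>(v := c)) (\<beta>'(v := d))"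
  proof cases
    case 1
    obtain \<beta> where "\<beta> \<in> S x" using S_nonempty assms(1) by blast
    moreover have "{u \<in> V. (\<beta>(v := c)) u \<noteq> (\<beta>(v := d)) u} = {v}" using 1 v_in_V by auto
    ultimately show ?thesis using that 1 unfolding col_adj_def by simp
  next
    case 2
    then show ?thesis using that S_adj_iff assms(1,2) col_adj_fun_upd by metis
  qed
  then show "\<exists>\<gamma>\<in>intro_cert v S (x, c). \<exists>\<gamma>'\<in>intro_cert v S (y, d). col_adj V \<gamma> \<gamma>'"
    unfolding intro_cert_def by auto
qed

lemma intro_label_adj_neq:
  assumes "x \<in> N" "y \<in> N" "(x, c) \<noteq> (y, d)" "x = y \<or> ((x, y) \<in> A \<and> c = d)"
  shows "intro_label T v (l x) c \<noteq> intro_label T v (l y) d"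
  using intro_label_inj[OF v_in_T label_extensional label_extensional] S_adj_label assms by blast

lemma intro_cert_connected: "x \<in> N \<Longrightarrow> col_connected V (intro_cert v S (x, c))"
  unfolding intro_cert_def prod.case
  by (rule col_connected_image[OF S_connected]) (simp_all add: col_adj_fun_upd)

lemma certificate_intro_graph:
  "certificate k V E T (intro_graph k E T v (N, A, l)) (intro_cert v S)"
proof -
  have "colorings k V E \<subseteq> (\<Union>p\<in>intro_nodes k E T v N l. intro_cert v S p)"
  proof
    fix \<gamma> assume \<gamma>: "\<gamma> \<in> colorings k V E"
    have "del_vertex E v \<subseteq> E \<inter> (V - {v}) \<times> (V - {v})"
      using simple unfolding simple_graph_def del_vertex_def by auto
    then have "restrict \<gamma> (V - {v}) \<in> colorings k (V - {v}) (del_vertex E v)"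
      using \<gamma> by (intro colorings_restrict) auto
    then obtain x where "x \<in> N" "restrict \<gamma> (V - {v}) \<in> S x" using S_Union by blast
    then show "\<gamma> \<in> (\<Union>p\<in>intro_nodes k E T v N l. intro_cert v S p)"
      using coloring_in_intro_cert[OF \<gamma>] by blast
  qed
  moreover have "(\<Union>p\<in>intro_nodes k E T v N l. intro_cert v S p) \<subseteq> colorings k V E"
  proof (rule UN_least)
    fix p assume "p \<in> intro_nodes k E T v N l"
    then show "intro_cert v S p \<subseteq> colorings k V E"
      by (cases p) (simp only: intro_cert_subset_colorings)
  qed
  moreover have "intro_cert v S (x, c) \<noteq> {}" if "x \<in> N" for x c
    using S_nonempty[OF that] unfolding intro_cert_def by simp
  moreover have "intro_cert v S (x, c) \<inter> intro_cert v S (y, d) = {}"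
    if "x \<in> N" "y \<in> N" "(x, c) \<noteq> (y, d)" for x y c d
  proof (rule equals0I)
    fix \<gamma> assume "\<gamma> \<in> intro_cert v S (x, c) \<inter> intro_cert v S (y, d)"
    then have "restrict \<gamma> (V - {v}) \<in> S x" "restrict \<gamma> (V - {v}) \<in> S y" "c = d"
      using mem_intro_cert that(1,2) by auto
    then show False using S_disjoint that by blast
  qed
  moreover have "restrict \<gamma> T = intro_label T v (l x) c"
    if "x \<in> N" "\<gamma> \<in> intro_cert v S (x, c)" for x c \<gamma>
    using that label_fun_upd unfolding intro_cert_def by auto
  ultimately show ?thesis
    unfolding certificate_def intro_graph_eq prod.case
    using intro_cert_subset_colorings intro_cert_adj_iff intro_label_adj_neq intro_cert_connected
    by (auto simp: intro_nodes_def)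
qed

end

theorem lemma3:
  fixes V :: "'v set" and E :: "('v \<times> 'v) set" and T :: "'v set" and v :: 'v and k :: nat
    and N :: "'n set" and A :: "('n \<times> 'n) set" and l :: "'n \<Rightarrow> 'v \<Rightarrow> nat"
  assumes "simple_graph V E"
    and "introduces V E T v"
    and "k \<ge> 1"
    and "lp_iso (N, A, l) (csg k (V - {v}) (del_vertex E v) (T - {v}))"
  shows "lp_iso (intro_graph k E T v (N, A, l)) (csg k V E T) \<and>
    (\<forall>S. certificate k (V - {v}) (del_vertex E v) (T - {v}) (N, A, l) S \<longrightarrow>
       (\<exists>S'. certificate k V E T (intro_graph k E T v (N, A, l)) S' \<and>
          (\<forall>\<gamma>\<in>colorings k V E. \<forall>x\<in>N. restrict \<gamma> (V - {v}) \<in> S x \<longrightarrow>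
              (x, \<gamma> v) \<in> fst (intro_graph k E T v (N, A, l)) \<and> \<gamma> \<in> S' (x, \<gamma> v))))"
proof -
  have intro: "vertex_introduction k V E T v N A l S"
    if "certificate k (V - {v}) (del_vertex E v) (T - {v}) (N, A, l) S" for S
    using assms(1,2) that by (rule vertex_introduction.intro)
  obtain S0 where "certificate k (V - {v}) (del_vertex E v) (T - {v}) (N, A, l) S0"
    using certificate_lp_iso[OF assms(4) certificate_csg] .
  then have "lp_iso (intro_graph k E T v (N, A, l)) (csg k V E T)"
    by (rule certificate_imp_lp_iso[OF vertex_introduction.certificate_intro_graph[OF intro]])
  moreover have "\<exists>S'. certificate k V E T (intro_graph k E T v (N, A, l)) S' \<and>
      (\<forall>\<gamma>\<in>colorings k V E. \<forall>x\<in>N. restrict \<gamma> (V - {v}) \<in> S x \<longrightarrow>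
         (x, \<gamma> v) \<in> fst (intro_graph k E T v (N, A, l)) \<and> \<gamma> \<in> S' (x, \<gamma> v))"
    if "certificate k (V - {v}) (del_vertex E v) (T - {v}) (N, A, l) S" for S
  proof -
    interpret vertex_introduction k V E T v N A l S by (rule intro[OF that])
    have "(x, \<gamma> v) \<in> fst (intro_graph k E T v (N, A, l)) \<and> \<gamma> \<in> intro_cert v S (x, \<gamma> v)"
      if "\<gamma> \<in> colorings k V E" "x \<in> N" "restrict \<gamma> (V - {v}) \<in> S x" for \<gamma> x
      using coloring_in_intro_cert[OF that] by (simp add: intro_graph_eq)
    with certificate_intro_graph show ?thesis by blast
  qed
  ultimately show ?thesis by blast
qed

end
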